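(* The minimum number of subgraphs in a $\{K_3,K_4\}$-decomposition of $K_{19}$ is $D(19,\{3,4\})=35$, and a $\{K_3,K_4\}$-decomposition of $K_{19}$ attaining this minimum consists of $13$ copies of $K_3$ and $22$ copies of $K_4$.
   Context: A $\{K_3,K_4\}$-decomposition of the complete graph $K_v$ is a collection of subgraphs of $K_v$, each isomorphic to $K_3$ or $K_4$, such that every edge of $K_v$ lies in exactly one of them. $D(v,\{3,4\})$ denotes the minimum number of subgraphs in a $\{K_3,K_4\}$-decomposition of $K_v$. *)

theory Defs
  imports Main
begin

text \<open>A subgraph of K_v isomorphic to K_3 or K_4 is a complete
subgraph, determined by its vertex set (a 3- or 4-element subset). Since each
edge lies in exactly one subgraph, no subgraph occurs twice, so a decomposition
is a set of such vertex sets (blocks).\<close>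

definition K34_decomposition :: "nat \<Rightarrow> nat set set \<Rightarrow> bool" where
  "K34_decomposition v \<B> \<longleftrightarrow>
     (\<forall>B\<in>\<B>. B \<subseteq> {..<v} \<and> (card B = 3 \<or> card B = 4)) \<and>
     (\<forall>x<v. \<forall>y<v. x \<noteq> y \<longrightarrow> (\<exists>!B. B \<in> \<B> \<and> x \<in> B \<and> y \<in> B))"

definition D34 :: "nat \<Rightarrow> nat" where
  "D34 v = Min {card \<B> | \<B>. K34_decomposition v \<B>}"

end

theory Submission
  imports Defs
begin

(* Counting edges, t triangles and f copies of K_4 in a decomposition of K_19 satisfy
   t + 2f = 57, so the decomposition has 57 - f blocks and it suffices to show f <= 22;
   the bound is attained by an explicit decomposition.
   At a vertex x, 2 t_x + 3 f_x = 18, so t_x is a multiple of 3. If f >= 23 then t <= 11.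
   Let W be the set of vertices on triangles. Then 3 |W| <= sum t_x = 3t, and the triangles
   at x in W are edge-disjoint inside W, so 2 t_x <= |W| - 1 <= 10; hence t_x = 3 on W and
   |W| = t is odd and at least 7. Counting the copies of K_4 by the number of their vertices
   in W, against the incidences and the pairs inside W, leaves only |W| = 11 with no K_4
   inside W and at most one K_4 meeting W in three vertices. If there is none, a vertex
   outside W sees W through copies of K_4 each meeting W evenly, against |W| odd. If there is
   one, local counts at its vertex outside W and at a suitable vertex of W force two copies
   of K_4 to share an edge. *)

lemma sum_incident_swap:
  fixes f :: "'a set \<Rightarrow> nat"
  assumes "finite C" "finite U"
  shows "(\<Sum>x\<in>U. \<Sum>B\<in>{B\<in>C. x \<in> B}. f B) = (\<Sum>B\<in>C. card (B \<inter> U) * f B)"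
proof -
  have "(\<Sum>x\<in>U. \<Sum>B\<in>{B\<in>C. x \<in> B}. f B) = (\<Sum>B\<in>C. \<Sum>x\<in>{x\<in>U. x \<in> B}. f B)"
    using sum.swap_restrict[OF assms(2,1), of "\<lambda>x B. f B" "\<lambda>x B. x \<in> B"] by simp
  also have "\<dots> = (\<Sum>B\<in>C. card (B \<inter> U) * f B)"
    by (intro sum.cong) (auto simp: Int_def conj_commute)
  finally show ?thesis .
qed

lemma sum_group_by_value:
  fixes h :: "'a \<Rightarrow> nat" and g :: "nat \<Rightarrow> nat"
  assumes "finite F" "\<And>B. B \<in> F \<Longrightarrow> h B \<le> n"
  shows "(\<Sum>B\<in>F. g (h B)) = (\<Sum>i\<le>n. g i * card {B\<in>F. h B = i})"
proof -
  have "(\<Sum>B\<in>F. g (h B)) = (\<Sum>i\<le>n. \<Sum>B\<in>{B\<in>F. h B = i}. g (h B))"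
    using sum.group[OF assms(1) finite_atMost, of h n "\<lambda>B. g (h B)"] assms(2)
    by (simp add: image_subset_iff)
  then show ?thesis
    by (simp add: mult.commute)
qed

lemma sum_le_remove_bounded:
  fixes f :: "'a \<Rightarrow> nat"
  assumes "finite A" "a \<in> A" "\<And>b. b \<in> A - {a} \<Longrightarrow> f b \<le> c"
  shows "sum f A \<le> f a + (card A - 1) * c"
  using sum_bounded_above[of "A - {a}" f c] assms by (simp add: sum.remove)

lemma sum_ge_remove_bounded:
  fixes f :: "'a \<Rightarrow> nat"
  assumes "finite A" "a \<in> A" "\<And>b. b \<in> A - {a} \<Longrightarrow> c \<le> f b"
  shows "f a + (card A - 1) * c \<le> sum f A"
  using sum_bounded_below[of "A - {a}" c f] assms by (simp add: sum.remove)

locale K34_decomp =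
  fixes v :: nat and \<B> :: "nat set set"
  assumes decomposition: "K34_decomposition v \<B>"
begin

definition K3_blocks :: "nat set set" where
  "K3_blocks = {B\<in>\<B>. card B = 3}"

definition K4_blocks :: "nat set set" where
  "K4_blocks = {B\<in>\<B>. card B = 4}"

definition K3_points :: "nat set" where
  "K3_points = \<Union>K3_blocks"

definition K3_degree :: "nat \<Rightarrow> nat" where
  "K3_degree x = card {B\<in>K3_blocks. x \<in> B}"

definition K4_degree :: "nat \<Rightarrow> nat" where
  "K4_degree x = card {B\<in>K4_blocks. x \<in> B}"

definition K4_meeting :: "nat \<Rightarrow> nat" where
  "K4_meeting i = card {B\<in>K4_blocks. card (B \<inter> K3_points) = i}"

lemma block_subset: "B \<in> \<B> \<Longrightarrow> B \<subseteq> {..<v}"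
  using decomposition by (simp add: K34_decomposition_def)

lemma card_block: "B \<in> \<B> \<Longrightarrow> card B = 3 \<or> card B = 4"
  using decomposition by (simp add: K34_decomposition_def)

lemma finite_block: "B \<in> \<B> \<Longrightarrow> finite B"
  using block_subset finite_lessThan by (rule finite_subset)

lemma finite_blocks: "finite \<B>"
proof -
  have "\<B> \<subseteq> Pow {..<v}"
    using block_subset by blast
  then show ?thesis
    by (rule finite_subset) simp
qed

lemma unique_block_through:
  assumes "x < v" "y < v" "x \<noteq> y"
  shows "\<exists>!B. B \<in> \<B> \<and> x \<in> B \<and> y \<in> B"
  using decomposition assms unfolding K34_decomposition_def by blast

lemma pair_covered:
  assumes "x < v" "y < v" "x \<noteq> y"
  shows "\<exists>B\<in>\<B>. x \<in> B \<and> y \<in> B"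
  using unique_block_through[OF assms] by blast

lemma block_unique:
  assumes "B \<in> \<B>" "B' \<in> \<B>" "x \<in> B" "x \<in> B'" "y \<in> B" "y \<in> B'" "x \<noteq> y"
  shows "B = B'"
proof -
  have "x < v" "y < v"
    using assms(1,3,5) block_subset by blast+
  then have "\<exists>!B. B \<in> \<B> \<and> x \<in> B \<and> y \<in> B"
    using assms(7) by (rule unique_block_through)
  then show ?thesis
    using assms(1-6) by blast
qed

lemma finite_K3_blocks: "finite K3_blocks"
  and finite_K4_blocks: "finite K4_blocks"
  using finite_blocks by (simp_all add: K3_blocks_def K4_blocks_def)

lemma sum_blocks_split:
  "(\<Sum>B\<in>{B\<in>\<B>. P B}. g B) =
     (\<Sum>B\<in>{B\<in>K3_blocks. P B}. g B) + (\<Sum>B\<in>{B\<in>K4_blocks. P B}. g B)"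
proof -
  have "{B\<in>\<B>. P B} = {B\<in>K3_blocks. P B} \<union> {B\<in>K4_blocks. P B}"
    using card_block by (auto simp: K3_blocks_def K4_blocks_def)
  moreover have "{B\<in>K3_blocks. P B} \<inter> {B\<in>K4_blocks. P B} = {}"
    by (auto simp: K3_blocks_def K4_blocks_def)
  ultimately show ?thesis
    using finite_K3_blocks finite_K4_blocks by (simp add: sum.union_disjoint)
qed

lemma sum_blocks_by_size:
  "(\<Sum>B\<in>{B\<in>\<B>. P B}. g (card B)) =
     g 3 * card {B\<in>K3_blocks. P B} + g 4 * card {B\<in>K4_blocks. P B}"
proof -
  have "(\<Sum>B\<in>{B\<in>K3_blocks. P B}. g (card B)) = (\<Sum>B\<in>{B\<in>K3_blocks. P B}. g 3)"
    by (intro sum.cong) (auto simp: K3_blocks_def)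
  moreover have "(\<Sum>B\<in>{B\<in>K4_blocks. P B}. g (card B)) = (\<Sum>B\<in>{B\<in>K4_blocks. P B}. g 4)"
    by (intro sum.cong) (auto simp: K4_blocks_def)
  ultimately show ?thesis
    by (simp add: sum_blocks_split mult.commute)
qed

lemma card_blocks: "card \<B> = card K3_blocks + card K4_blocks"
  using sum_blocks_by_size[where P="\<lambda>_. True" and g="\<lambda>_. 1"] by simp

lemma card_Int_remove:
  assumes "B \<in> \<B>" "x \<in> B" "x \<in> X"
  shows "card (B \<inter> (X - {x})) = card (B \<inter> X) - 1"
  using assms by (simp add: Int_Diff[symmetric] finite_block)

lemma card_eq_sum_blocks_through:
  assumes "x < v" "X \<subseteq> {..<v} - {x}"
  shows "card X = (\<Sum>B\<in>{B\<in>\<B>. x \<in> B}. card (B \<inter> X))"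
proof -
  have "X = (\<Union>B\<in>{B\<in>\<B>. x \<in> B}. B \<inter> X)"
  proof (intro equalityI subsetI)
    fix y assume "y \<in> X"
    then obtain B where "B \<in> \<B>" "x \<in> B" "y \<in> B"
      using assms pair_covered[of x y] by auto
    with \<open>y \<in> X\<close> show "y \<in> (\<Union>B\<in>{B\<in>\<B>. x \<in> B}. B \<inter> X)"
      by auto
  qed auto
  moreover have
    "card (\<Union>B\<in>{B\<in>\<B>. x \<in> B}. B \<inter> X) = (\<Sum>B\<in>{B\<in>\<B>. x \<in> B}. card (B \<inter> X))"
  proof (rule card_UN_disjoint)
    show "finite {B\<in>\<B>. x \<in> B}"
      using finite_blocks by simp
    show "\<forall>B\<in>{B\<in>\<B>. x \<in> B}. finite (B \<inter> X)"
      using finite_block by blast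
    show "\<forall>B\<in>{B\<in>\<B>. x \<in> B}. \<forall>B'\<in>{B\<in>\<B>. x \<in> B}.
        B \<noteq> B' \<longrightarrow> B \<inter> X \<inter> (B' \<inter> X) = {}"
      using assms(2) block_unique by fastforce
  qed
  ultimately show ?thesis
    by simp
qed

lemma card_pairs_eq_sum_blocks:
  assumes "U \<subseteq> {..<v}"
  shows "card U * (card U - 1) = (\<Sum>B\<in>\<B>. card (B \<inter> U) * (card (B \<inter> U) - 1))"
proof -
  have "card U * (card U - 1) = (\<Sum>x\<in>U. card (U - {x}))"
    using assms finite_subset by fastforce
  also have "\<dots> = (\<Sum>x\<in>U. \<Sum>B\<in>{B\<in>\<B>. x \<in> B}. card (B \<inter> U) - 1)"
  proof (rule sum.cong[OF refl])
    fix x assume "x \<in> U"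
    then have "card (U - {x}) = (\<Sum>B\<in>{B\<in>\<B>. x \<in> B}. card (B \<inter> (U - {x})))"
      using assms by (intro card_eq_sum_blocks_through) auto
    with \<open>x \<in> U\<close> show "card (U - {x}) = (\<Sum>B\<in>{B\<in>\<B>. x \<in> B}. card (B \<inter> U) - 1)"
      by (simp add: card_Int_remove)
  qed
  also have "\<dots> = (\<Sum>B\<in>\<B>. card (B \<inter> U) * (card (B \<inter> U) - 1))"
    using assms finite_subset by (intro sum_incident_swap finite_blocks) auto
  finally show ?thesis .
qed

lemma degree_equation: "x < v \<Longrightarrow> 2 * K3_degree x + 3 * K4_degree x = v - 1"
proof -
  assume "x < v"
  then have "v - 1 = (\<Sum>B\<in>{B\<in>\<B>. x \<in> B}. card (B \<inter> ({..<v} - {x})))"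
    using card_eq_sum_blocks_through[of x "{..<v} - {x}"] by simp
  also have "\<dots> = (\<Sum>B\<in>{B\<in>\<B>. x \<in> B}. card B - 1)"
    using \<open>x < v\<close> block_subset
    by (intro sum.cong) (auto simp: card_Int_remove Int_absorb2)
  also have "\<dots> = 2 * K3_degree x + 3 * K4_degree x"
    using sum_blocks_by_size[where P="\<lambda>B. x \<in> B" and g="\<lambda>n. n - 1"]
    by (simp add: K3_degree_def K4_degree_def)
  finally show ?thesis
    by simp
qed

lemma edge_count: "6 * card K3_blocks + 12 * card K4_blocks = v * (v - 1)"
proof -
  have "v * (v - 1) = (\<Sum>B\<in>\<B>. card (B \<inter> {..<v}) * (card (B \<inter> {..<v}) - 1))"
    using card_pairs_eq_sum_blocks[of "{..<v}"] by simp
  also have "\<dots> = (\<Sum>B\<in>\<B>. card B * (card B - 1))"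
    using block_subset by (intro sum.cong) (auto simp: Int_absorb2)
  also have "\<dots> = 6 * card K3_blocks + 12 * card K4_blocks"
    using sum_blocks_by_size[where P="\<lambda>_. True" and g="\<lambda>n. n * (n - 1)"] by simp
  finally show ?thesis
    by simp
qed

lemma K3_block_subset: "B \<in> K3_blocks \<Longrightarrow> B \<subseteq> K3_points"
  by (auto simp: K3_points_def)

lemma K3_points_subset: "K3_points \<subseteq> {..<v}"
  using block_subset by (auto simp: K3_points_def K3_blocks_def)

lemma finite_K3_points: "finite K3_points"
  using K3_points_subset finite_lessThan by (rule finite_subset)

lemma K3_degree_pos: "x \<in> K3_points \<Longrightarrow> 0 < K3_degree x"
  using finite_K3_blocks by (auto simp: K3_degree_def K3_points_def card_gt_0_iff)

lemma K3_degree_outside: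
  assumes "x \<notin> K3_points"
  shows "K3_degree x = 0"
proof -
  have "{B\<in>K3_blocks. x \<in> B} = {}"
    using assms by (auto simp: K3_points_def)
  then show ?thesis
    unfolding K3_degree_def by (metis card.empty)
qed

lemma sum_K3_degree: "(\<Sum>x\<in>K3_points. K3_degree x) = 3 * card K3_blocks"
proof -
  have "(\<Sum>x\<in>K3_points. K3_degree x) = (\<Sum>B\<in>K3_blocks. card (B \<inter> K3_points) * 1)"
    using sum_incident_swap[OF finite_K3_blocks finite_K3_points, of "\<lambda>_. 1"]
    by (simp add: K3_degree_def)
  also have "\<dots> = (\<Sum>B\<in>K3_blocks. 3)"
    using K3_block_subset by (intro sum.cong) (auto simp: Int_absorb2 K3_blocks_def)
  finally show ?thesis
    by simp
qed

lemma card_K3_points_remove: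
  assumes "x \<in> K3_points"
  shows "card K3_points - 1 =
    2 * K3_degree x + (\<Sum>B\<in>{B\<in>K4_blocks. x \<in> B}. card (B \<inter> K3_points) - 1)"
proof -
  have "x < v"
    using assms K3_points_subset by blast
  then have "card (K3_points - {x}) = (\<Sum>B\<in>{B\<in>\<B>. x \<in> B}. card (B \<inter> (K3_points - {x})))"
    using K3_points_subset by (intro card_eq_sum_blocks_through) auto
  also have "\<dots> = (\<Sum>B\<in>{B\<in>\<B>. x \<in> B}. card (B \<inter> K3_points) - 1)"
    using assms by (intro sum.cong) (auto simp: card_Int_remove)
  also have "\<dots> = (\<Sum>B\<in>{B\<in>K3_blocks. x \<in> B}. card (B \<inter> K3_points) - 1)
      + (\<Sum>B\<in>{B\<in>K4_blocks. x \<in> B}. card (B \<inter> K3_points) - 1)"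
    by (rule sum_blocks_split)
  also have "(\<Sum>B\<in>{B\<in>K3_blocks. x \<in> B}. card (B \<inter> K3_points) - 1) = 2 * K3_degree x"
    using K3_block_subset by (simp add: Int_absorb2 K3_blocks_def K3_degree_def)
  finally show ?thesis
    using assms finite_K3_points by simp
qed

lemma K3_degree_le: "x \<in> K3_points \<Longrightarrow> 2 * K3_degree x \<le> card K3_points - 1"
  using card_K3_points_remove by fastforce

lemma sum_K4_meet_outside:
  assumes "x < v" "x \<notin> K3_points"
  shows "(\<Sum>B\<in>{B\<in>K4_blocks. x \<in> B}. card (B \<inter> K3_points)) = card K3_points"
proof -
  have "card K3_points = (\<Sum>B\<in>{B\<in>\<B>. x \<in> B}. card (B \<inter> K3_points))"
    using assms K3_points_subset by (intro card_eq_sum_blocks_through) auto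
  also have "\<dots> = (\<Sum>B\<in>{B\<in>K3_blocks. x \<in> B}. card (B \<inter> K3_points))
      + (\<Sum>B\<in>{B\<in>K4_blocks. x \<in> B}. card (B \<inter> K3_points))"
    by (rule sum_blocks_split)
  also have "{B\<in>K3_blocks. x \<in> B} = {}"
    using assms(2) K3_block_subset by blast
  finally show ?thesis
    by simp
qed

lemma card_pairs_K3_points:
  "card K3_points * (card K3_points - 1) =
     6 * card K3_blocks + (\<Sum>B\<in>K4_blocks. card (B \<inter> K3_points) * (card (B \<inter> K3_points) - 1))"
proof -
  have "card K3_points * (card K3_points - 1) =
      (\<Sum>B\<in>K3_blocks. card (B \<inter> K3_points) * (card (B \<inter> K3_points) - 1))
      + (\<Sum>B\<in>K4_blocks. card (B \<inter> K3_points) * (card (B \<inter> K3_points) - 1))"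
    using card_pairs_eq_sum_blocks[OF K3_points_subset]
      sum_blocks_split[where P="\<lambda>_. True"
        and g="\<lambda>B. card (B \<inter> K3_points) * (card (B \<inter> K3_points) - 1)"]
    by simp
  also have "(\<Sum>B\<in>K3_blocks. card (B \<inter> K3_points) * (card (B \<inter> K3_points) - 1)) = 6 * card K3_blocks"
    using K3_block_subset by (simp add: Int_absorb2 K3_blocks_def)
  finally show ?thesis .
qed

lemma card_K4_block_Int_le: "B \<in> K4_blocks \<Longrightarrow> card (B \<inter> K3_points) \<le> 4"
  using card_mono[OF finite_block Int_lower1, of B K3_points] by (auto simp: K4_blocks_def)

lemma sum_K4_blocks_by_meeting:
  "(\<Sum>B\<in>K4_blocks. g (card (B \<inter> K3_points))) = (\<Sum>i\<le>4. g i * K4_meeting i)"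
  unfolding K4_meeting_def using finite_K4_blocks card_K4_block_Int_le by (rule sum_group_by_value)

lemma K4_meeting_eq_0_iff:
  "K4_meeting i = 0 \<longleftrightarrow> (\<forall>B\<in>K4_blocks. card (B \<inter> K3_points) \<noteq> i)"
  using finite_K4_blocks by (auto simp: K4_meeting_def)

lemma three_dvd_K3_degree:
  assumes "3 dvd v - 1" "x < v"
  shows "3 dvd K3_degree x"
proof -
  have "3 dvd 2 * K3_degree x + 3 * K4_degree x"
    using assms by (simp add: degree_equation)
  then show ?thesis
    by presburger
qed

lemma K3_degree_ge_3:
  assumes "3 dvd v - 1" "x \<in> K3_points"
  shows "3 \<le> K3_degree x"
  using assms K3_points_subset by (intro dvd_imp_le three_dvd_K3_degree K3_degree_pos) auto

lemma card_K3_points_le: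
  assumes "3 dvd v - 1"
  shows "card K3_points \<le> card K3_blocks"
  using sum_bounded_below[of K3_points 3 K3_degree] K3_degree_ge_3[OF assms] sum_K3_degree
  by simp

lemma K3_degree_eq_3:
  assumes "3 dvd v - 1" "card K3_blocks \<le> 12" "x \<in> K3_points"
  shows "K3_degree x = 3"
proof -
  have "2 * K3_degree x \<le> 11"
    using K3_degree_le[OF assms(3)] card_K3_points_le[OF assms(1)] assms(2) by linarith
  moreover have "3 dvd K3_degree x"
    using assms K3_points_subset by (intro three_dvd_K3_degree) auto
  moreover have "3 \<le> K3_degree x"
    using assms by (intro K3_degree_ge_3)
  ultimately show ?thesis
    by presburger
qed

lemma card_K3_points_eq:
  assumes "\<And>x. x \<in> K3_points \<Longrightarrow> K3_degree x = 3"
  shows "card K3_points = card K3_blocks"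
  using sum_K3_degree assms by simp

lemma card_K4_blocks_by_meeting: "card K4_blocks = (\<Sum>i\<le>4. K4_meeting i)"
  using sum_K4_blocks_by_meeting[of "\<lambda>_. 1"] by simp

lemma K4_meeting_counts:
  assumes "\<And>x. x \<in> K3_points \<Longrightarrow> K3_degree x = 3"
  shows "3 * (\<Sum>i\<le>4. i * K4_meeting i) = card K3_points * (v - 7)"
    and "(\<Sum>i\<le>4. i * (i - 1) * K4_meeting i) = card K3_points * (card K3_points - 7)"
proof -
  have "3 * K4_degree x = v - 7" if "x \<in> K3_points" for x
    using that assms K3_points_subset degree_equation[of x] by fastforce
  then have "3 * (\<Sum>x\<in>K3_points. K4_degree x) = card K3_points * (v - 7)"
    by (simp add: sum_distrib_left)
  moreover have "(\<Sum>B\<in>K4_blocks. card (B \<inter> K3_points)) = (\<Sum>x\<in>K3_points. K4_degree x)"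
    using sum_incident_swap[OF finite_K4_blocks finite_K3_points, of "\<lambda>_. 1"]
    by (simp add: K4_degree_def)
  ultimately show "3 * (\<Sum>i\<le>4. i * K4_meeting i) = card K3_points * (v - 7)"
    using sum_K4_blocks_by_meeting[of "\<lambda>i. i"] by simp
  show "(\<Sum>i\<le>4. i * (i - 1) * K4_meeting i) = card K3_points * (card K3_points - 7)"
    using card_pairs_K3_points card_K3_points_eq[OF assms] sum_K4_blocks_by_meeting[of "\<lambda>i. i * (i - 1)"]
    by (simp add: diff_mult_distrib2)
qed

lemma K4_block_odd_meeting:
  assumes "odd (card K3_points)" "x < v" "x \<notin> K3_points"
  shows "\<exists>B\<in>K4_blocks. x \<in> B \<and> odd (card (B \<inter> K3_points))"
proof (rule ccontr)
  assume "\<not> ?thesis"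
  then have "even (\<Sum>B\<in>{B\<in>K4_blocks. x \<in> B}. card (B \<inter> K3_points))"
    by (intro dvd_sum) auto
  then show False
    using assms sum_K4_meet_outside by simp
qed

lemma K4_meeting_odd_ne_0:
  assumes "odd (card K3_points)" "card K3_points < v"
  shows "K4_meeting 1 \<noteq> 0 \<or> K4_meeting 3 \<noteq> 0"
proof -
  have "\<not> {..<v} \<subseteq> K3_points"
  proof
    assume "{..<v} \<subseteq> K3_points"
    then have "card {..<v} \<le> card K3_points"
      by (rule card_mono[OF finite_K3_points])
    then show False
      using assms(2) by simp
  qed
  then obtain y where "y < v" "y \<notin> K3_points"
    by blast
  then obtain B where B: "B \<in> K4_blocks" "odd (card (B \<inter> K3_points))"
    using K4_block_odd_meeting assms(1) by blast
  then have "card (B \<inter> K3_points) = 1 \<or> card (B \<inter> K3_points) = 3"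
    using card_K4_block_Int_le[of B] by presburger
  then show ?thesis
    using B(1) by (auto simp: K4_meeting_eq_0_iff)
qed

lemma K4_block_meeting_once_through:
  assumes "v = 19" "card K3_points = 11"
    and "B3 \<in> K4_blocks" "card (B3 \<inter> K3_points) = 3" "s \<in> B3" "s \<notin> K3_points"
    and "\<And>B. B \<in> K4_blocks \<Longrightarrow> B \<noteq> B3 \<Longrightarrow> card (B \<inter> K3_points) \<in> {1, 2}"
  shows "\<exists>B\<in>K4_blocks. s \<in> B \<and> card (B \<inter> K3_points) = 1"
proof (rule ccontr)
  assume no_once: "\<not> ?thesis"
  have "s < v"
    using assms(3,5) block_subset by (auto simp: K4_blocks_def)
  have "K4_degree s = 6"
    using degree_equation[OF \<open>s < v\<close>] K3_degree_outside[OF assms(6)] assms(1) by simp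
  define A where "A = {B\<in>K4_blocks. s \<in> B}"
  have A: "finite A" "B3 \<in> A" "card A = 6"
    using finite_K4_blocks assms(3,5) \<open>K4_degree s = 6\<close> by (simp_all add: A_def K4_degree_def)
  \<comment> \<open>The six copies of K_4 through s join s to the 11 points of W, but would reach at
    least 3 + 5 * 2 of them.\<close>
  have "2 \<le> card (B \<inter> K3_points)" if "B \<in> A - {B3}" for B
    using that assms(7)[of B] no_once by (auto simp: A_def)
  then have "card (B3 \<inter> K3_points) + (card A - 1) * 2 \<le> (\<Sum>B\<in>A. card (B \<inter> K3_points))"
    by (rule sum_ge_remove_bounded[OF A(1,2)])
  then show False
    using sum_K4_meet_outside[OF \<open>s < v\<close> assms(6)] assms(2,4) A(3) by (simp add: A_def)
qed

lemma K4_block_meeting_once_point: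
  assumes "v = 19" "\<And>x. x \<in> K3_points \<Longrightarrow> K3_degree x = 3" "card K3_points = 11"
    and "\<And>B. B \<in> K4_blocks \<Longrightarrow> B \<noteq> B3 \<Longrightarrow> card (B \<inter> K3_points) \<in> {1, 2}"
    and "B1 \<in> K4_blocks" "B1 \<inter> K3_points = {u}"
  shows "u \<in> B3"
proof (rule ccontr)
  assume "u \<notin> B3"
  have "u \<in> K3_points" "u \<in> B1"
    using assms(6) by auto
  have "K4_degree u = 4"
    using degree_equation[of u] assms(1,2) \<open>u \<in> K3_points\<close> K3_points_subset by fastforce
  \<comment> \<open>The four copies of K_4 through u join u to the 10 - 2 * 3 = 4 points of W not on
    triangles at u; without B3 each reaches at most one of them, and B1 none.\<close>
  define C where "C = {B\<in>K4_blocks. u \<in> B}"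
  have C: "finite C" "B1 \<in> C" "card C = 4"
    using finite_K4_blocks assms(5) \<open>u \<in> B1\<close> \<open>K4_degree u = 4\<close>
    by (simp_all add: C_def K4_degree_def)
  have "card (B \<inter> K3_points) - 1 \<le> 1" if "B \<in> C - {B1}" for B
  proof -
    have "B \<in> K4_blocks" "B \<noteq> B3"
      using that \<open>u \<notin> B3\<close> by (auto simp: C_def)
    then show ?thesis
      using assms(4) by fastforce
  qed
  then have "(\<Sum>B\<in>C. card (B \<inter> K3_points) - 1) \<le> (card (B1 \<inter> K3_points) - 1) + (card C - 1) * 1"
    by (rule sum_le_remove_bounded[OF C(1,2)])
  then show False
    using card_K3_points_remove[OF \<open>u \<in> K3_points\<close>] assms(2,3,6) \<open>u \<in> K3_points\<close> C(3)
    by (simp add: C_def)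
qed

lemma K4_meeting_3_ne_1:
  assumes "v = 19" "\<And>x. x \<in> K3_points \<Longrightarrow> K3_degree x = 3" "card K3_points = 11"
    and "K4_meeting 0 = 0" "K4_meeting 4 = 0"
  shows "K4_meeting 3 \<noteq> 1"
proof
  assume "K4_meeting 3 = 1"
  then obtain B3 where B3: "{B\<in>K4_blocks. card (B \<inter> K3_points) = 3} = {B3}"
    unfolding K4_meeting_def by (rule card_1_singletonE)
  then have B3_K4: "B3 \<in> K4_blocks" "card (B3 \<inter> K3_points) = 3"
    by auto
  have meet_1_2: "card (B \<inter> K3_points) \<in> {1, 2}" if "B \<in> K4_blocks" "B \<noteq> B3" for B
  proof -
    have "card (B \<inter> K3_points) \<noteq> 3"
      using that B3 by blast
    moreover have "card (B \<inter> K3_points) \<noteq> 0" "card (B \<inter> K3_points) \<noteq> 4"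
      using that assms(4,5) by (simp_all add: K4_meeting_eq_0_iff)
    ultimately show ?thesis
      using card_K4_block_Int_le[OF that(1)] by auto
  qed
  have "\<not> B3 \<subseteq> K3_points"
    using B3_K4 by (auto simp: K4_blocks_def Int_absorb2)
  then obtain s where s: "s \<in> B3" "s \<notin> K3_points"
    by blast
  obtain B1 where B1: "B1 \<in> K4_blocks" "s \<in> B1" "card (B1 \<inter> K3_points) = 1"
    using K4_block_meeting_once_through[OF assms(1,3) B3_K4 s meet_1_2] by blast
  obtain u where u: "B1 \<inter> K3_points = {u}"
    using B1(3) by (rule card_1_singletonE)
  have "u \<in> B3"
    using K4_block_meeting_once_point[OF assms(1-3) meet_1_2 B1(1) u] .
  moreover have "s \<noteq> u"
    using s(2) u by blast
  ultimately have "B1 = B3"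
    using block_unique[of B1 B3 s u] B1 B3_K4(1) s(1) u by (auto simp: K4_blocks_def)
  then show False
    using B1(3) B3_K4(2) by simp
qed

end

lemma K4_meeting_arith_19:
  fixes w m0 m1 m2 m3 m4 :: nat
  assumes "w + 2 * (m0 + m1 + m2 + m3 + m4) = 57" "7 \<le> w" "w \<le> 11"
    and "m1 + 2 * m2 + 3 * m3 + 4 * m4 = 4 * w" "2 * m2 + 6 * m3 + 12 * m4 = w * (w - 7)"
  shows "w = 11 \<and> m4 = 0 \<and> (m1 = 0 \<and> m3 = 0 \<or> m3 = 1 \<and> m0 = 0)"
proof -
  have "w = 7 \<or> w = 9 \<or> w = 11"
    using assms(1-3) by presburger
  then consider "w = 7" | "w = 9" | "w = 11"
    by blast
  then show ?thesis
  proof cases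
    case 3
    then have "m0 + m3 + 3 * m4 = 1" "m1 = 3 * m3 + 8 * m4"
      using assms(1,4,5) by simp_all
    with 3 show ?thesis
      by auto
  qed (use assms(1,4,5) in simp_all)
qed

lemma (in K34_decomp) card_K4_blocks_le_22:
  assumes "v = 19"
  shows "card K4_blocks \<le> 22"
proof (rule ccontr)
  assume many_K4: "\<not> ?thesis"
  have blocks: "card K3_blocks + 2 * card K4_blocks = 57"
    using edge_count assms by simp
  have regular: "K3_degree x = 3" if "x \<in> K3_points" for x
    using K3_degree_eq_3[OF _ _ that] assms blocks many_K4 by simp
  define w where "w = card K3_points"
  have w_blocks: "w + 2 * card K4_blocks = 57"
    using blocks card_K3_points_eq[OF regular] by (simp add: w_def)
  then have "w \<noteq> 0"
    by presburger
  then obtain x where "x \<in> K3_points"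
    unfolding w_def by (metis card.empty ex_in_conv)
  then have "7 \<le> w"
    using K3_degree_le[of x] regular by (simp add: w_def)
  have "w = 11 \<and> K4_meeting 4 = 0 \<and>
      (K4_meeting 1 = 0 \<and> K4_meeting 3 = 0 \<or> K4_meeting 3 = 1 \<and> K4_meeting 0 = 0)"
  proof (rule K4_meeting_arith_19[of w _ _ "K4_meeting 2"])
    show "w + 2 * (K4_meeting 0 + K4_meeting 1 + K4_meeting 2 + K4_meeting 3 + K4_meeting 4) = 57"
      using w_blocks card_K4_blocks_by_meeting by (simp add: atMost_nat_numeral)
    show "K4_meeting 1 + 2 * K4_meeting 2 + 3 * K4_meeting 3 + 4 * K4_meeting 4 = 4 * w"
      using K4_meeting_counts(1)[OF regular] assms by (simp add: atMost_nat_numeral w_def)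
    show "2 * K4_meeting 2 + 6 * K4_meeting 3 + 12 * K4_meeting 4 = w * (w - 7)"
      using K4_meeting_counts(2)[OF regular] by (simp add: atMost_nat_numeral w_def)
    show "7 \<le> w" "w \<le> 11"
      using \<open>7 \<le> w\<close> w_blocks many_K4 by simp_all
  qed
  then show False
  proof (elim conjE disjE)
    assume "w = 11" "K4_meeting 1 = 0" "K4_meeting 3 = 0"
    then show False
      using K4_meeting_odd_ne_0 assms by (simp add: w_def)
  next
    assume "w = 11" "K4_meeting 4 = 0" "K4_meeting 3 = 1" "K4_meeting 0 = 0"
    then show False
      using K4_meeting_3_ne_1[OF assms regular] by (simp add: w_def)
  qed
qed

definition K34_decomposition_check :: "nat \<Rightarrow> nat list list \<Rightarrow> bool" where
  "K34_decomposition_check v bs \<longleftrightarrow>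
     list_all (\<lambda>b. distinct b \<and> list_all (\<lambda>x. x < v) b \<and> (length b = 3 \<or> length b = 4)) bs \<and>
     distinct (map set bs) \<and>
     list_all (\<lambda>x. list_all (\<lambda>y.
         x = y \<or> length (filter (\<lambda>b. x \<in> set b \<and> y \<in> set b) bs) = 1) [0..<v]) [0..<v]"

lemma K34_decomposition_check_sound:
  assumes "K34_decomposition_check v bs"
  shows "K34_decomposition v (set (map set bs))" "card (set (map set bs)) = length bs"
proof -
  have blocks: "\<forall>b\<in>set bs. distinct b \<and> (\<forall>x\<in>set b. x < v) \<and> (length b = 3 \<or> length b = 4)"
    and dist: "distinct (map set bs)"
    and pairs: "\<forall>x<v. \<forall>y<v. x \<noteq> y \<longrightarrow>
      length (filter (\<lambda>b. x \<in> set b \<and> y \<in> set b) bs) = 1"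
    using assms by (auto simp: K34_decomposition_check_def list_all_iff atLeast0LessThan)
  show "card (set (map set bs)) = length bs"
    using dist distinct_card by fastforce
  have "\<exists>!B. B \<in> set (map set bs) \<and> x \<in> B \<and> y \<in> B" if "x < v" "y < v" "x \<noteq> y" for x y
  proof -
    have "length (filter (\<lambda>b. x \<in> set b \<and> y \<in> set b) bs) = 1"
      using pairs that by blast
    then obtain b0 where b0: "filter (\<lambda>b. x \<in> set b \<and> y \<in> set b) bs = [b0]"
      by (auto simp: length_Suc_conv)
    show ?thesis
    proof (rule ex1I[of _ "set b0"])
      have "b0 \<in> set (filter (\<lambda>b. x \<in> set b \<and> y \<in> set b) bs)"
        using b0 by simp
      then show "set b0 \<in> set (map set bs) \<and> x \<in> set b0 \<and> y \<in> set b0"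
        by auto
    next
      fix B assume "B \<in> set (map set bs) \<and> x \<in> B \<and> y \<in> B"
      then obtain b where "b \<in> set (filter (\<lambda>b. x \<in> set b \<and> y \<in> set b) bs)" "B = set b"
        by auto
      then show "B = set b0"
        using b0 by simp
    qed
  qed
  moreover have "\<forall>B\<in>set (map set bs). B \<subseteq> {..<v} \<and> (card B = 3 \<or> card B = 4)"
    using blocks by (auto simp: distinct_card)
  ultimately show "K34_decomposition v (set (map set bs))"
    unfolding K34_decomposition_def by blast
qed

definition K19_witness :: "nat list list" where
  "K19_witness =
    [[0,1,12,18], [0,2,8,9], [0,3,16,17], [0,4,11,13], [0,5,6,15], [0,7,10,14], [1,2,7,11],
     [1,3,4,14], [1,5,13,16], [1,6,9,10], [1,8,15,17], [2,3,6,18], [2,4,5,12], [2,10,15,16],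
     [2,13,14,17], [4,8,10,18], [4,7,15], [4,6,17], [4,9,16], [3,10,12,13], [3,9,11,15],
     [12,14,15], [13,15,18], [7,9,13], [6,8,13], [9,12,17], [3,5,7,8], [7,17,18], [5,9,14,18],
     [11,16,18], [6,11,14], [8,11,12], [8,14,16], [5,10,11,17], [6,7,12,16]]"

lemma K34_decomposition_check_K19_witness: "K34_decomposition_check 19 K19_witness"
  unfolding K19_witness_def by code_simp

lemma D34_eqI:
  assumes "K34_decomposition v \<B>" "card \<B> = n"
    and "\<And>\<B>'. K34_decomposition v \<B>' \<Longrightarrow> n \<le> card \<B>'"
  shows "D34 v = n"
proof -
  have "card \<B>' \<le> card (Pow {..<v})" if "K34_decomposition v \<B>'" for \<B>'
    using that unfolding K34_decomposition_def by (intro card_mono) auto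
  then have "{card \<B> | \<B>. K34_decomposition v \<B>} \<subseteq> {..card (Pow {..<v})}"
    by blast
  then have "finite {card \<B> | \<B>. K34_decomposition v \<B>}"
    using finite_subset by blast
  moreover have "n \<in> {card \<B> | \<B>. K34_decomposition v \<B>}"
    using assms(1,2) by blast
  ultimately show ?thesis
    unfolding D34_def using assms(3) by (intro Min_eqI) blast+
qed

theorem mainTheorem2:
  shows "D34 19 = 35 \<and>
         (\<exists>\<B>. K34_decomposition 19 \<B> \<and> card \<B> = 35) \<and>
         (\<forall>\<B>. K34_decomposition 19 \<B> \<and> card \<B> = 35 \<longrightarrow>
              card {B \<in> \<B>. card B = 3} = 13 \<and> card {B \<in> \<B>. card B = 4} = 22)"
proof -
  have lower_bound: "35 \<le> card \<B> \<and> (card \<B> = 35 \<longrightarrow>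
      card {B \<in> \<B>. card B = 3} = 13 \<and> card {B \<in> \<B>. card B = 4} = 22)"
    if "K34_decomposition 19 \<B>" for \<B>
  proof -
    interpret K34_decomp 19 \<B>
      using that by (rule K34_decomp.intro)
    show ?thesis
      using card_blocks edge_count card_K4_blocks_le_22
      unfolding K3_blocks_def K4_blocks_def by simp
  qed
  have witness: "K34_decomposition 19 (set (map set K19_witness))"
      "card (set (map set K19_witness)) = 35"
    using K34_decomposition_check_sound[OF K34_decomposition_check_K19_witness]
    by (simp_all add: K19_witness_def)
  then have "D34 19 = 35"
    using lower_bound by (intro D34_eqI) auto
  then show ?thesis
    using witness lower_bound by blast
qed

end
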